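(* Let $\gamma\in(0,\tfrac12)$, and let $\mathbf{w}\in\mathbb{R}^R$ be a fixed vector of regularization weights with strictly positive entries, and set $w_o=\min_{k=1,\dots,R} w_k$. Let $\boldsymbol{\theta}^\star\in\arg\min_{\boldsymbol{\theta}\in\mathbb{R}^R}\mathcal{R}(\boldsymbol{\theta})$ and $$\widehat{\boldsymbol{\theta}}\in\arg\min_{\boldsymbol{\theta}\in\mathbb{R}^R}\; -\frac1n\ln p_{\boldsymbol{\theta}}(\mathbf{y}\mid\mathbf{r}) + n^{-\gamma}\,\|\mathbf{w}\odot\boldsymbol{\theta}\|_1 ,$$ and assume both minimizers exist. Then $$\mathcal{R}(\widehat{\boldsymbol{\theta}})\le \mathcal{R}(\boldsymbol{\theta}^\star)+2n^{-\gamma}\,\|\mathbf{w}\odot\boldsymbol{\theta}^\star\|_1$$ holds with probability at least $$\max\Big(0,\;1-2R\exp\Big\{-\frac{w_o^2\,n^{1-2\gamma}}{2Y^2}\Big\}\Big).$$ The bound requires no assumption that $p(y\mid r)$ belongs to the Poisson model class.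
   Context: A spatial domain is partitioned into $R$ disjoint regions indexed by $r\in\{1,\dots,R\}$. Data $(\mathbf{r},\mathbf{y})=\{(r_1,y_1),\dots,(r_n,y_n)\}$ are $n$ independent draws $(r_i,y_i)\sim p(r)p(y\mid r)$ from an unknown distribution, where the counts satisfy $y_i\in\{0,1,\dots,Y\}$ for a known maximum count $Y$. Write $p(\mathbf{y}\mid\mathbf{r})=\prod_{i=1}^n p(y_i\mid r_i)$ and $\mathbb{E}[y\mid r]$ for the true conditional mean. Model class: for $\boldsymbol{\theta}\in\mathbb{R}^R$, $p_{\boldsymbol{\theta}}(y\mid r)$ is the Poisson distribution with mean $\mathbb{E}_{\boldsymbol{\theta}}[y\mid r]=\exp(\boldsymbol{\phi}(r)^\top\boldsymbol{\theta})$, where $\boldsymbol{\phi}(r)=(\phi_1(r),\dots,\phi_R(r))^\top$ is a fixed spatial basis vector (cubic B-spline values, $\phi_k$ centered at region $k$) with $0\le\phi_k(r)\le 1$ for all $k,r$; and $p_{\boldsymbol{\theta}}(\mathbf{y}\mid\mathbf{r})=\prod_{i=1}^n p_{\boldsymbol{\theta}}(y_i\mid r_i)$. Out-of-sample accuracy (KL divergence per sample, conditional on $\mathbf{r}$): $$\mathcal{R}(\boldsymbol{\theta})=\frac1n\,\mathbb{E}_{\mathbf{y}\mid\mathbf{r}}\Big[\ln\frac{p(\mathbf{y}\mid\mathbf{r})}{p_{\boldsymbol{\theta}}(\mathbf{y}\mid\mathbf{r})}\Big].$$ $\odot$ denotes the elementwise (Hadamard) product. *)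

theory Defs
  imports "HOL-Probability.Probability"
begin

text \<open>Regions are the elements of a finite type 'r (so R = CARD('r)); parameter vectors
  theta in R^R are functions 'r => real.  The basis is phi r k = phi_k(r).\<close>

definition pois_mean :: "('r::finite \<Rightarrow> 'r \<Rightarrow> real) \<Rightarrow> ('r \<Rightarrow> real) \<Rightarrow> 'r \<Rightarrow> real" where
  "pois_mean \<phi> \<theta> r = exp (\<Sum>k\<in>UNIV. \<phi> r k * \<theta> k)"

definition model_lik :: "('r::finite \<Rightarrow> 'r \<Rightarrow> real) \<Rightarrow> ('r \<Rightarrow> real) \<Rightarrow> nat \<Rightarrow> (nat \<Rightarrow> 'r) \<Rightarrow> (nat \<Rightarrow> nat) \<Rightarrow> real" where
  "model_lik \<phi> \<theta> n rs ys = (\<Prod>i<n. pmf (poisson_pmf (pois_mean \<phi> \<theta> (rs i))) (ys i))"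

definition true_law :: "('r \<Rightarrow> nat pmf) \<Rightarrow> nat \<Rightarrow> (nat \<Rightarrow> 'r) \<Rightarrow> (nat \<Rightarrow> nat) pmf" where
  "true_law q n rs = Pi_pmf {..<n} 0 (\<lambda>i. q (rs i))"

definition true_lik :: "('r \<Rightarrow> nat pmf) \<Rightarrow> nat \<Rightarrow> (nat \<Rightarrow> 'r) \<Rightarrow> (nat \<Rightarrow> nat) \<Rightarrow> real" where
  "true_lik q n rs ys = (\<Prod>i<n. pmf (q (rs i)) (ys i))"

definition risk :: "('r \<Rightarrow> nat pmf) \<Rightarrow> ('r::finite \<Rightarrow> 'r \<Rightarrow> real) \<Rightarrow> nat \<Rightarrow> (nat \<Rightarrow> 'r) \<Rightarrow> ('r \<Rightarrow> real) \<Rightarrow> real" where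
  "risk q \<phi> n rs \<theta> = (1 / real n) *
     measure_pmf.expectation (true_law q n rs)
       (\<lambda>ys. ln (true_lik q n rs ys / model_lik \<phi> \<theta> n rs ys))"

definition pen_obj :: "('r::finite \<Rightarrow> 'r \<Rightarrow> real) \<Rightarrow> nat \<Rightarrow> (nat \<Rightarrow> 'r) \<Rightarrow> real \<Rightarrow> ('r \<Rightarrow> real) \<Rightarrow> (nat \<Rightarrow> nat) \<Rightarrow> ('r \<Rightarrow> real) \<Rightarrow> real" where
  "pen_obj \<phi> n rs \<gamma> w ys \<theta> =
     - (1 / real n) * ln (model_lik \<phi> \<theta> n rs ys)
     + real n powr (-\<gamma>) * (\<Sum>k\<in>UNIV. \<bar>w k * \<theta> k\<bar>)"

end

theory Submission
  imports Defs
begin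

text \<open>The Poisson log-likelihood is linear in \<open>\<theta>\<close> except for the log-partition term
  \<open>\<Sum>\<^sub>i exp (\<phi>(r\<^sub>i)\<^sup>T\<theta>)\<close>, which appears identically in the risk. Hence risk and empirical
  loss differ by a \<open>\<theta>\<close>-free term plus \<open>\<langle>\<theta>, Z\<rangle>\<close>, where \<open>Z\<^sub>k\<close> is the centred sufficient
  statistic \<open>(1/n) \<Sum>\<^sub>i (y\<^sub>i - E y\<^sub>i) \<phi>\<^sub>k(r\<^sub>i)\<close>; only the conditional mean of the true law
  enters, so no model assumption is needed. On the event \<open>|Z\<^sub>k| \<le> n\<^sup>-\<^sup>\<gamma> w\<^sub>k\<close> for all \<open>k\<close>,
  comparing the penalised objective at the estimator and at \<open>\<theta>\<^sup>\<star>\<close> and bounding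
  \<open>\<langle>\<theta>, Z\<rangle>\<close> by the weighted \<open>\<ell>\<^sub>1\<close> penalty yields the oracle inequality. Each \<open>Z\<^sub>k\<close> is an
  average of \<open>n\<close> independent variables with values in \<open>[0, Y]\<close>, so Hoeffding's inequality
  and a union bound over the \<open>R\<close> coordinates bound the probability of the complement.\<close>

lemma Pi_pmf_Hoeffding_abs_ge:
  fixes I :: "'i set" and d :: 'a and p :: "'i \<Rightarrow> 'a pmf" and f :: "'i \<Rightarrow> 'a \<Rightarrow> real"
  defines "M \<equiv> Pi_pmf I d p"
  assumes I: "finite I" "I \<noteq> {}"
    and range: "\<And>i x. i \<in> I \<Longrightarrow> x \<in> set_pmf (p i) \<Longrightarrow> f i x \<in> {a..b}"
    and "a < b" "0 \<le> \<epsilon>"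
  shows "measure_pmf.prob M
           {ys. \<epsilon> \<le> \<bar>(\<Sum>i\<in>I. f i (ys i)) - (\<Sum>i\<in>I. measure_pmf.expectation M (\<lambda>ys. f i (ys i)))\<bar>}
         \<le> 2 * exp (-2 * \<epsilon>\<^sup>2 / (real (card I) * (b - a)\<^sup>2))"
proof -
  interpret Hoeffding_ineq "measure_pmf M" I "\<lambda>i ys. f i (ys i)" "\<lambda>_. a" "\<lambda>_. b"
      "\<Sum>i\<in>I. measure_pmf.expectation M (\<lambda>ys. f i (ys i))"
  proof unfold_locales
    show "prob_space.indep_vars (measure_pmf M) (\<lambda>_. borel) (\<lambda>i ys. f i (ys i)) I"
      unfolding M_def
      by (intro prob_space.indep_vars_compose2[OF _ indep_vars_Pi_pmf[OF I(1)]])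
         (auto simp: measure_pmf.prob_space_axioms)
  next
    fix i assume "i \<in> I"
    then show "AE ys in measure_pmf M. f i (ys i) \<in> {a..b}"
      using range by (intro AE_pmfI) (auto simp: M_def set_Pi_pmf[OF I(1)] PiE_dflt_def)
  qed (use I in auto)
  have "(\<Sum>i\<in>I. (b - a)\<^sup>2) > 0"
    using I \<open>a < b\<close> by (intro sum_pos) auto
  from Hoeffding_ineq_abs_ge[OF \<open>0 \<le> \<epsilon>\<close> this] show ?thesis
    by (simp add: le_less)
qed

lemma abs_sum_mult_le_weighted_l1:
  fixes z w \<theta> :: "'k \<Rightarrow> real"
  assumes "\<And>k. k \<in> K \<Longrightarrow> \<bar>z k\<bar> \<le> \<tau> * w k" and "0 \<le> \<tau>"
  shows "\<bar>\<Sum>k\<in>K. \<theta> k * z k\<bar> \<le> \<tau> * (\<Sum>k\<in>K. \<bar>w k * \<theta> k\<bar>)"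
proof -
  have "\<bar>\<Sum>k\<in>K. \<theta> k * z k\<bar> \<le> (\<Sum>k\<in>K. \<bar>\<theta> k * z k\<bar>)"
    by (rule sum_abs)
  also have "\<dots> \<le> (\<Sum>k\<in>K. \<tau> * \<bar>w k * \<theta> k\<bar>)"
  proof (rule sum_mono)
    fix k assume "k \<in> K"
    then have "\<bar>\<theta> k\<bar> * \<bar>z k\<bar> \<le> \<bar>\<theta> k\<bar> * (\<tau> * w k)"
      using assms(1) by (intro mult_left_mono) auto
    also have "\<dots> = \<tau> * (w k * \<bar>\<theta> k\<bar>)"
      by simp
    also have "\<dots> \<le> \<tau> * \<bar>w k * \<theta> k\<bar>"
      using \<open>0 \<le> \<tau>\<close> by (intro mult_left_mono) (auto simp: abs_mult intro: mult_right_mono)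
    finally show "\<bar>\<theta> k * z k\<bar> \<le> \<tau> * \<bar>w k * \<theta> k\<bar>"
      by (simp add: abs_mult)
  qed
  finally show ?thesis
    by (simp add: sum_distrib_left)
qed

lemma penalized_minimizer_oracle_inequality:
  fixes R L :: "('k::finite \<Rightarrow> real) \<Rightarrow> real"
  assumes gap: "\<And>\<theta>. R \<theta> = c + L \<theta> + (\<Sum>k\<in>UNIV. \<theta> k * z k)"
    and dev: "\<And>k. \<bar>z k\<bar> \<le> \<tau> * w k" and "0 \<le> \<tau>"
    and min: "L \<theta>h + \<tau> * (\<Sum>k\<in>UNIV. \<bar>w k * \<theta>h k\<bar>) \<le> L \<theta>s + \<tau> * (\<Sum>k\<in>UNIV. \<bar>w k * \<theta>s k\<bar>)"
  shows "R \<theta>h \<le> R \<theta>s + 2 * \<tau> * (\<Sum>k\<in>UNIV. \<bar>w k * \<theta>s k\<bar>)"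
proof -
  have "\<bar>\<Sum>k\<in>UNIV. \<theta> k * z k\<bar> \<le> \<tau> * (\<Sum>k\<in>UNIV. \<bar>w k * \<theta> k\<bar>)" for \<theta>
    using dev \<open>0 \<le> \<tau>\<close> by (intro abs_sum_mult_le_weighted_l1) auto
  from this[of \<theta>h] this[of \<theta>s] show ?thesis
    using min gap[of \<theta>h] gap[of \<theta>s] by linarith
qed

lemma measure_pmf_prob_all_ge:
  assumes "finite K"
  shows "1 - (\<Sum>k\<in>K. measure_pmf.prob M {x. \<not> P k x}) \<le> measure_pmf.prob M {x. \<forall>k\<in>K. P k x}"
proof -
  have "measure_pmf.prob M (UNIV - {x. \<forall>k\<in>K. P k x}) \<le> measure_pmf.prob M (\<Union>k\<in>K. {x. \<not> P k x})"
    by (intro measure_pmf.finite_measure_mono) auto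
  also have "\<dots> \<le> (\<Sum>k\<in>K. measure_pmf.prob M {x. \<not> P k x})"
    using assms by (intro measure_pmf.finite_measure_subadditive_finite) auto
  finally show ?thesis
    using measure_pmf.prob_compl[of "{x. \<forall>k\<in>K. P k x}" M] by simp
qed

lemma ln_pmf_poisson_exp: "ln (pmf (poisson_pmf (exp s)) k) = real k * s - exp s - ln (fact k)"
proof -
  have "pmf (poisson_pmf (exp s)) k = exp (real k * s) / fact k * exp (- exp s)"
    by (simp add: pmf_poisson exp_of_nat_mult)
  then show ?thesis by (simp add: ln_mult ln_div)
qed

lemma pmf_poisson_exp_pos: "0 < pmf (poisson_pmf (exp s)) k"
  by (simp add: pmf_poisson)

definition suff_stat :: "('r::finite \<Rightarrow> 'r \<Rightarrow> real) \<Rightarrow> nat \<Rightarrow> (nat \<Rightarrow> 'r) \<Rightarrow> 'r \<Rightarrow> (nat \<Rightarrow> nat) \<Rightarrow> real" where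
  "suff_stat \<phi> n rs k ys = (\<Sum>i<n. real (ys i) * \<phi> (rs i) k)"

definition log_partition :: "('r::finite \<Rightarrow> 'r \<Rightarrow> real) \<Rightarrow> nat \<Rightarrow> (nat \<Rightarrow> 'r) \<Rightarrow> ('r \<Rightarrow> real) \<Rightarrow> real" where
  "log_partition \<phi> n rs \<theta> = (\<Sum>i<n. pois_mean \<phi> \<theta> (rs i))"

lemma model_lik_pos: "0 < model_lik \<phi> \<theta> n rs ys"
  unfolding model_lik_def pois_mean_def by (intro prod_pos) (simp add: pmf_poisson_exp_pos)

lemma ln_model_lik:
  "ln (model_lik \<phi> \<theta> n rs ys) =
     (\<Sum>k\<in>UNIV. \<theta> k * suff_stat \<phi> n rs k ys) - log_partition \<phi> n rs \<theta> - (\<Sum>i<n. ln (fact (ys i)))"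
proof -
  have "ln (model_lik \<phi> \<theta> n rs ys) = (\<Sum>i<n. ln (pmf (poisson_pmf (pois_mean \<phi> \<theta> (rs i))) (ys i)))"
    unfolding model_lik_def pois_mean_def
    by (rule ln_prod) (auto intro: pmf_poisson_exp_pos[THEN less_imp_neq, symmetric])
  also have "\<dots> = (\<Sum>i<n. real (ys i) * (\<Sum>k\<in>UNIV. \<phi> (rs i) k * \<theta> k))
                    - log_partition \<phi> n rs \<theta> - (\<Sum>i<n. ln (fact (ys i)))"
    by (simp only: pois_mean_def ln_pmf_poisson_exp log_partition_def sum_subtractf)
  also have "(\<Sum>i<n. real (ys i) * (\<Sum>k\<in>UNIV. \<phi> (rs i) k * \<theta> k)) = (\<Sum>k\<in>UNIV. \<theta> k * suff_stat \<phi> n rs k ys)"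
    unfolding suff_stat_def by (simp add: sum_distrib_left mult_ac sum.swap[of _ "{..<n}"])
  finally show ?thesis .
qed

lemma finite_set_true_law:
  assumes "\<And>r. set_pmf (q r) \<subseteq> {0..Y}"
  shows "finite (set_pmf (true_law q n rs))"
proof (rule finite_subset)
  show "set_pmf (true_law q n rs) \<subseteq> PiE_dflt {..<n} 0 (\<lambda>_. {0..Y})"
    using assms by (fastforce simp: true_law_def set_Pi_pmf PiE_dflt_def)
qed auto

lemma true_lik_pos: "ys \<in> set_pmf (true_law q n rs) \<Longrightarrow> 0 < true_lik q n rs ys"
  by (auto simp: true_law_def true_lik_def set_Pi_pmf PiE_dflt_def pmf_positive intro!: prod_pos)

definition stat_deviation :: "('r \<Rightarrow> nat pmf) \<Rightarrow> ('r::finite \<Rightarrow> 'r \<Rightarrow> real) \<Rightarrow> nat \<Rightarrow> (nat \<Rightarrow> 'r) \<Rightarrow> 'r \<Rightarrow> (nat \<Rightarrow> nat) \<Rightarrow> real" where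
  "stat_deviation q \<phi> n rs k ys =
     (suff_stat \<phi> n rs k ys - measure_pmf.expectation (true_law q n rs) (suff_stat \<phi> n rs k)) / real n"

lemma risk_eq_empirical_loss_plus_deviation:
  assumes fin: "finite (set_pmf (true_law q n rs))"
  shows "\<exists>c. \<forall>\<theta>. risk q \<phi> n rs \<theta> =
           c + - (1 / real n) * ln (model_lik \<phi> \<theta> n rs ys) + (\<Sum>k\<in>UNIV. \<theta> k * stat_deviation q \<phi> n rs k ys)"
proof -
  let ?M = "true_law q n rs"
  let ?E = "measure_pmf.expectation ?M"
  let ?lfact = "\<lambda>ys. \<Sum>i<n. ln (fact (ys i) :: real)"
  have int: "integrable (measure_pmf ?M) f" for f :: "(nat \<Rightarrow> nat) \<Rightarrow> real"
    using fin by (rule integrable_measure_pmf_finite)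
  have risk: "risk q \<phi> n rs \<theta> = (?E (\<lambda>ys. ln (true_lik q n rs ys)) + ?E ?lfact + log_partition \<phi> n rs \<theta>
                - (\<Sum>k\<in>UNIV. \<theta> k * ?E (suff_stat \<phi> n rs k))) / real n" for \<theta>
  proof -
    have "?E (\<lambda>ys. ln (true_lik q n rs ys / model_lik \<phi> \<theta> n rs ys))
        = ?E (\<lambda>ys. ln (true_lik q n rs ys) + ?lfact ys + log_partition \<phi> n rs \<theta>
                     - (\<Sum>k\<in>UNIV. \<theta> k * suff_stat \<phi> n rs k ys))"
      by (intro integral_cong_AE AE_pmfI)
         (simp_all add: ln_div ln_model_lik true_lik_pos[THEN less_imp_neq, symmetric]
                       model_lik_pos[THEN less_imp_neq, symmetric])
    also have "\<dots> = ?E (\<lambda>ys. ln (true_lik q n rs ys)) + ?E ?lfact + log_partition \<phi> n rs \<theta>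
                - (\<Sum>k\<in>UNIV. \<theta> k * ?E (suff_stat \<phi> n rs k))"
      by (simp add: int integral_sum)
    finally show ?thesis
      unfolding risk_def by simp
  qed
  have deviation: "(\<Sum>k\<in>UNIV. \<theta> k * stat_deviation q \<phi> n rs k ys) =
      ((\<Sum>k\<in>UNIV. \<theta> k * suff_stat \<phi> n rs k ys) - (\<Sum>k\<in>UNIV. \<theta> k * ?E (suff_stat \<phi> n rs k))) / real n" for \<theta>
    unfolding stat_deviation_def
    by (simp add: sum_subtractf[symmetric] sum_divide_distrib right_diff_distrib)
  show ?thesis
    by (rule exI[of _ "(?E (\<lambda>ys. ln (true_lik q n rs ys)) + ?E ?lfact - ?lfact ys) / real n"])
       (simp add: risk deviation ln_model_lik diff_divide_distrib add_divide_distrib)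
qed

lemma prob_stat_deviation_ge:
  assumes basis: "\<And>r k. 0 \<le> \<phi> r k \<and> \<phi> r k \<le> 1"
    and support: "\<And>r. set_pmf (q r) \<subseteq> {0..Y}"
    and "0 < n" "0 < Y" "0 \<le> \<epsilon>"
  shows "measure_pmf.prob (true_law q n rs) {ys. \<epsilon> \<le> \<bar>stat_deviation q \<phi> n rs k ys\<bar>}
           \<le> 2 * exp (-2 * real n * \<epsilon>\<^sup>2 / (real Y)\<^sup>2)"
proof -
  let ?M = "true_law q n rs"
  let ?f = "\<lambda>i y. real y * \<phi> (rs i) k"
  let ?E = "\<Sum>i<n. measure_pmf.expectation ?M (\<lambda>ys. ?f i (ys i))"
  have range: "?f i y \<in> {0..real Y}" if "y \<in> set_pmf (q (rs i))" for i y
  proof -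
    have "real y \<le> real Y"
      using support that by fastforce
    moreover have "real y * \<phi> (rs i) k \<le> real y"
      using basis[of "rs i" k] by (simp add: mult_left_le)
    ultimately show ?thesis
      using basis[of "rs i" k] by simp
  qed
  have "measure_pmf.expectation ?M (suff_stat \<phi> n rs k) = ?E"
    unfolding suff_stat_def
    by (simp add: integrable_measure_pmf_finite finite_set_true_law[OF support])
  then have "{ys. \<epsilon> \<le> \<bar>stat_deviation q \<phi> n rs k ys\<bar>} =
             {ys. real n * \<epsilon> \<le> \<bar>(\<Sum>i<n. ?f i (ys i)) - ?E\<bar>}"
    using \<open>0 < n\<close> by (simp add: stat_deviation_def suff_stat_def pos_le_divide_eq mult.commute)
  also have "measure_pmf.prob ?M \<dots> \<le> 2 * exp (-2 * (real n * \<epsilon>)\<^sup>2 / (real (card {..<n}) * (real Y - 0)\<^sup>2))"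
    unfolding true_law_def
    using range \<open>0 < n\<close> \<open>0 < Y\<close> \<open>0 \<le> \<epsilon>\<close>
    by (intro Pi_pmf_Hoeffding_abs_ge) auto
  also have "\<dots> = 2 * exp (-2 * real n * \<epsilon>\<^sup>2 / (real Y)\<^sup>2)"
    using \<open>0 < n\<close> by (simp add: power_mult_distrib power2_eq_square)
  finally show ?thesis .
qed

lemma prob_stat_deviation_gt_weight:
  fixes w :: "'r::finite \<Rightarrow> real"
  assumes basis: "\<And>r k. 0 \<le> \<phi> r k \<and> \<phi> r k \<le> 1"
    and support: "\<And>r. set_pmf (q r) \<subseteq> {0..Y}"
    and "0 < n" "0 < Y" "0 \<le> w\<^sub>o" "w\<^sub>o \<le> w k"
  shows "measure_pmf.prob (true_law q n rs) {ys. \<not> \<bar>stat_deviation q \<phi> n rs k ys\<bar> \<le> real n powr (-\<gamma>) * w k}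
           \<le> 2 * exp (- (w\<^sub>o\<^sup>2 * real n powr (1 - 2 * \<gamma>) / (2 * (real Y)\<^sup>2)))"
proof -
  let ?\<epsilon> = "real n powr (-\<gamma>) * w k"
  have scale: "real n * (real n powr (-\<gamma>))\<^sup>2 = real n powr (1 - 2 * \<gamma>)"
    using \<open>0 < n\<close> by (simp add: power2_eq_square powr_add[symmetric] powr_diff powr_minus_divide)
  have "w\<^sub>o\<^sup>2 \<le> (w k)\<^sup>2"
    using assms(5,6) by (intro power_mono)
  have "w\<^sub>o\<^sup>2 * real n powr (1 - 2 * \<gamma>) / (2 * (real Y)\<^sup>2)
      = w\<^sub>o\<^sup>2 * (real n * (real n powr (-\<gamma>))\<^sup>2) / (2 * (real Y)\<^sup>2)"
    by (simp add: scale)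
  also have "\<dots> \<le> (w k)\<^sup>2 * (real n * (real n powr (-\<gamma>))\<^sup>2) / (2 * (real Y)\<^sup>2)"
    using \<open>w\<^sub>o\<^sup>2 \<le> (w k)\<^sup>2\<close> by (intro divide_right_mono mult_right_mono) simp_all
  \<comment> \<open>Hoeffding gives an exponent four times larger than the one claimed\<close>
  also have "\<dots> \<le> 4 * ((w k)\<^sup>2 * (real n * (real n powr (-\<gamma>))\<^sup>2)) / (2 * (real Y)\<^sup>2)"
    by (intro divide_right_mono) simp_all
  also have "\<dots> = 2 * real n * ?\<epsilon>\<^sup>2 / (real Y)\<^sup>2"
    by (simp add: power_mult_distrib)
  finally have exponent: "w\<^sub>o\<^sup>2 * real n powr (1 - 2 * \<gamma>) / (2 * (real Y)\<^sup>2) \<le> 2 * real n * ?\<epsilon>\<^sup>2 / (real Y)\<^sup>2" .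
  have "measure_pmf.prob (true_law q n rs) {ys. \<not> \<bar>stat_deviation q \<phi> n rs k ys\<bar> \<le> ?\<epsilon>}
      \<le> measure_pmf.prob (true_law q n rs) {ys. ?\<epsilon> \<le> \<bar>stat_deviation q \<phi> n rs k ys\<bar>}"
    by (intro measure_pmf.finite_measure_mono) auto
  also have "\<dots> \<le> 2 * exp (-2 * real n * ?\<epsilon>\<^sup>2 / (real Y)\<^sup>2)"
    using assms by (intro prob_stat_deviation_ge) auto
  also have "\<dots> \<le> 2 * exp (- (w\<^sub>o\<^sup>2 * real n powr (1 - 2 * \<gamma>) / (2 * (real Y)\<^sup>2)))"
    using exponent by simp
  finally show ?thesis .
qed

lemma penalized_estimator_oracle_inequality:
  fixes w :: "'r::finite \<Rightarrow> real"
  assumes fin: "finite (set_pmf (true_law q n rs))"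
    and dev: "\<And>k. \<bar>stat_deviation q \<phi> n rs k ys\<bar> \<le> real n powr (-\<gamma>) * w k"
    and min: "\<And>\<theta>. pen_obj \<phi> n rs \<gamma> w ys \<theta>h \<le> pen_obj \<phi> n rs \<gamma> w ys \<theta>"
  shows "risk q \<phi> n rs \<theta>h \<le> risk q \<phi> n rs \<theta>s + 2 * real n powr (-\<gamma>) * (\<Sum>k\<in>UNIV. \<bar>w k * \<theta>s k\<bar>)"
proof -
  obtain c where gap: "\<And>\<theta>. risk q \<phi> n rs \<theta> =
      c + - (1 / real n) * ln (model_lik \<phi> \<theta> n rs ys) + (\<Sum>k\<in>UNIV. \<theta> k * stat_deviation q \<phi> n rs k ys)"
    using risk_eq_empirical_loss_plus_deviation[OF fin] by blast
  show ?thesis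
    by (rule penalized_minimizer_oracle_inequality
          [where L = "\<lambda>\<theta>. - (1 / real n) * ln (model_lik \<phi> \<theta> n rs ys)", OF gap dev])
       (use min[of \<theta>s] in \<open>simp_all add: pen_obj_def\<close>)
qed

theorem theorem1:
  fixes \<phi> :: "'r::finite \<Rightarrow> 'r \<Rightarrow> real"
    and q :: "'r \<Rightarrow> nat pmf"
    and Y n :: nat
    and rs :: "nat \<Rightarrow> 'r"
    and \<gamma> :: real
    and w \<theta>star :: "'r \<Rightarrow> real"
  assumes basis: "\<And>r k. 0 \<le> \<phi> r k \<and> \<phi> r k \<le> 1"
    and support: "\<And>r. set_pmf (q r) \<subseteq> {0..Y}"
    and n_pos: "n \<ge> 1"
    and gamma: "0 < \<gamma>" "\<gamma> < 1/2"
    and w_pos: "\<And>k. w k > 0"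
    and star_min: "\<And>\<theta>. risk q \<phi> n rs \<theta>star \<le> risk q \<phi> n rs \<theta>"
    and hat_exists: "\<And>ys. ys \<in> set_pmf (true_law q n rs) \<Longrightarrow>
                       \<exists>\<theta>h. \<forall>\<theta>. pen_obj \<phi> n rs \<gamma> w ys \<theta>h \<le> pen_obj \<phi> n rs \<gamma> w ys \<theta>"
  shows "measure_pmf.prob (true_law q n rs)
           {ys. \<forall>\<theta>h. (\<forall>\<theta>. pen_obj \<phi> n rs \<gamma> w ys \<theta>h \<le> pen_obj \<phi> n rs \<gamma> w ys \<theta>) \<longrightarrow>
                  risk q \<phi> n rs \<theta>h \<le> risk q \<phi> n rs \<theta>star
                      + 2 * real n powr (-\<gamma>) * (\<Sum>k\<in>UNIV. \<bar>w k * \<theta>star k\<bar>)}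
         \<ge> max 0 (1 - 2 * real CARD('r) *
              exp (- ((Min (range w))\<^sup>2 * real n powr (1 - 2 * \<gamma>) / (2 * (real Y)\<^sup>2))))"
proof (cases "Y = 0")
  case True
  \<comment> \<open>the exponent divides by zero, so the claimed bound is \<open>max 0 (1 - 2 R) = 0\<close>\<close>
  have "1 \<le> real CARD('r)"
    by simp
  then have "\<not> 2 * real CARD('r) \<le> 1"
    by linarith
  with True show ?thesis
    by (simp add: max_def)
next
  case False
  let ?w\<^sub>o = "Min (range w)"
  let ?B = "2 * exp (- (?w\<^sub>o\<^sup>2 * real n powr (1 - 2 * \<gamma>) / (2 * (real Y)\<^sup>2)))"
  let ?good = "{ys. \<forall>k\<in>UNIV. \<bar>stat_deviation q \<phi> n rs k ys\<bar> \<le> real n powr (-\<gamma>) * w k}"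
  have fin: "finite (set_pmf (true_law q n rs))"
    using support by (rule finite_set_true_law)
  have w\<^sub>o: "0 \<le> ?w\<^sub>o" "\<And>k. ?w\<^sub>o \<le> w k"
    using w_pos by (auto simp: less_imp_le)
  have tail: "measure_pmf.prob (true_law q n rs)
      {ys. \<not> \<bar>stat_deviation q \<phi> n rs k ys\<bar> \<le> real n powr (-\<gamma>) * w k} \<le> ?B" for k
    using n_pos False by (intro prob_stat_deviation_gt_weight[OF basis support _ _ w\<^sub>o]) auto
  have "1 - real CARD('r) * ?B \<le> 1 - (\<Sum>k\<in>UNIV. measure_pmf.prob (true_law q n rs)
          {ys. \<not> \<bar>stat_deviation q \<phi> n rs k ys\<bar> \<le> real n powr (-\<gamma>) * w k})"
    using sum_mono[of UNIV, OF tail] by simp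
  also have "\<dots> \<le> measure_pmf.prob (true_law q n rs) ?good"
    by (rule measure_pmf_prob_all_ge) simp
  also have "\<dots> \<le> measure_pmf.prob (true_law q n rs)
           {ys. \<forall>\<theta>h. (\<forall>\<theta>. pen_obj \<phi> n rs \<gamma> w ys \<theta>h \<le> pen_obj \<phi> n rs \<gamma> w ys \<theta>) \<longrightarrow>
                  risk q \<phi> n rs \<theta>h \<le> risk q \<phi> n rs \<theta>star
                      + 2 * real n powr (-\<gamma>) * (\<Sum>k\<in>UNIV. \<bar>w k * \<theta>star k\<bar>)}"
    by (intro measure_pmf.finite_measure_mono) (auto intro: penalized_estimator_oracle_inequality[OF fin])
  finally show ?thesis
    by simp
qed

end
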